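(* Let $M,N_c,N_g$ be positive integers with $N_g\le N_c$, let $T_s>0$, and let $S_k^{AD}:[-\pi/2,\pi/2]\times\{0,T_s,\dots,(N_g-1)T_s\}\to[0,\infty)$ be bounded and, for each delay, Riemann integrable in $\theta$. Define the space-frequency channel covariance matrix $$\mathbf{R}_k=\sum_{q=0}^{N_g-1}\int_{-\pi/2}^{\pi/2}\left[\mathbf{f}_{N_c,q}\otimes\mathbf{v}_{M,\theta}\right]\left[\mathbf{f}_{N_c,q}\otimes\mathbf{v}_{M,\theta}\right]^{H} S_k^{AD}(\theta,qT_s)\,d\theta\in\mathbb{C}^{MN_c\times MN_c}.$$ Define $\mathbf{V}_M\in\mathbb{C}^{M\times M}$ by $[\mathbf{V}_M]_{i,j}=\frac{1}{\sqrt{M}}\exp\!\left(-\jmath 2\pi\frac{i(j-M/2)}{M}\right)$ and $\boldsymbol{\Omega}_k\in\mathbb{R}^{M\times N_g}$ by $$[\boldsymbol{\Omega}_k]_{i,j}=MN_c(\theta_{i+1}-\theta_i)\,S_k^{AD}(\theta_i,\tau_j),\qquad \theta_m=\arcsin(2m/M-1),\ \tau_n=nT_s.$$ Then, for fixed non-negative integers $i$ and $j$, $$\lim_{M\to\infty}\Big[\mathbf{R}_k-\left(\mathbf{F}_{N_c\times N_g}\otimes\mathbf{V}_M\right)\mathrm{diag}\{\mathrm{vec}(\boldsymbol{\Omega}_k)\}\left(\mathbf{F}_{N_c\times N_g}\otimes\mathbf{V}_M\right)^{H}\Big]_{i,j}=0,$$ i.e. as $M\to\infty$, $\mathbf{R}_k$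 tends entrywise to $\left(\mathbf{F}_{N_c\times N_g}\otimes\mathbf{V}_M\right)\mathrm{diag}\{\mathrm{vec}(\boldsymbol{\Omega}_k)\}\left(\mathbf{F}_{N_c\times N_g}\otimes\mathbf{V}_M\right)^{H}$.
   Context: $\jmath=\sqrt{-1}$. Matrix/vector element indices start at $0$. $\mathbf{F}_N$ is the $N\times N$ unitary DFT matrix, $[\mathbf{F}_N]_{i,j}=\frac{1}{\sqrt N}e^{-\jmath 2\pi ij/N}$; $\mathbf{F}_{N\times G}$ is the matrix of the first $G$ columns of $\mathbf{F}_N$; $\mathbf{f}_{N,q}$ is the $q$th column of $\sqrt{N}\mathbf{F}_N$. The array response vector is $\mathbf{v}_{M,\theta}=[1,\ e^{-\jmath\pi\sin\theta},\ \dots,\ e^{-\jmath\pi(M-1)\sin\theta}]^T\in\mathbb{C}^{M}$. $\otimes$ is the Kronecker product, $\mathrm{vec}(\cdot)$ stacks columns, $\mathrm{diag}\{\mathbf{x}\}$ is the diagonal matrix with $\mathbf{x}$ on its diagonal. $S_k^{AD}(\theta,\tau)$ is the power angle-delay spectrum of user $k$. *)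

theory Defs
  imports "HOL-Analysis.Analysis"
begin

text \<open>Matrices/vectors are functions of 0-based natural indices; dimensions are
  carried explicitly where needed (Kronecker products, summations).\<close>


definition riemann_has_integral :: "(real \<Rightarrow> real) \<Rightarrow> real \<Rightarrow> real \<Rightarrow> real \<Rightarrow> bool" where
  "riemann_has_integral f a b I \<longleftrightarrow>
     (\<forall>e>0. \<exists>d>0. \<forall>(n::nat) (x::nat \<Rightarrow> real) (t::nat \<Rightarrow> real).
        (x 0 = a \<and> x n = b \<and>
         (\<forall>i<n. x i < x (Suc i) \<and> x (Suc i) - x i < d \<and> x i \<le> t i \<and> t i \<le> x (Suc i)))
        \<longrightarrow> \<bar>(\<Sum>i<n. f (t i) * (x (Suc i) - x i)) - I\<bar> < e)"

definition riemann_integrable :: "(real \<Rightarrow> real) \<Rightarrow> real \<Rightarrow> real \<Rightarrow> bool" where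
  "riemann_integrable f a b \<longleftrightarrow> (\<exists>I. riemann_has_integral f a b I)"

text \<open>Unitary DFT matrix F_N; also F_{N x G} (first G columns, same entries).\<close>
definition dft :: "nat \<Rightarrow> nat \<Rightarrow> nat \<Rightarrow> complex" where
  "dft N i j = complex_of_real (1 / sqrt (real N)) *
     exp (- \<i> * complex_of_real (2 * pi * real i * real j / real N))"

text \<open>f_{N,q}: q-th column of sqrt N * F_N, as a vector indexed by a.\<close>
definition fcol :: "nat \<Rightarrow> nat \<Rightarrow> nat \<Rightarrow> complex" where
  "fcol N q a = exp (- \<i> * complex_of_real (2 * pi * real q * real a / real N))"

definition arr_resp :: "real \<Rightarrow> nat \<Rightarrow> complex" where
  "arr_resp \<theta> b = exp (- \<i> * complex_of_real (pi * real b * sin \<theta>))"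

definition kron_vec :: "nat \<Rightarrow> (nat \<Rightarrow> complex) \<Rightarrow> (nat \<Rightarrow> complex) \<Rightarrow> nat \<Rightarrow> complex" where
  "kron_vec n2 x y i = x (i div n2) * y (i mod n2)"

definition kron_mat :: "nat \<Rightarrow> nat \<Rightarrow> (nat \<Rightarrow> nat \<Rightarrow> complex) \<Rightarrow> (nat \<Rightarrow> nat \<Rightarrow> complex)
     \<Rightarrow> nat \<Rightarrow> nat \<Rightarrow> complex" where
  "kron_mat m2 n2 A B i j = A (i div m2) (j div n2) * B (i mod m2) (j mod n2)"

definition outer :: "(nat \<Rightarrow> complex) \<Rightarrow> nat \<Rightarrow> nat \<Rightarrow> complex" where
  "outer u i j = u i * cnj (u j)"

definition mat_mult :: "nat \<Rightarrow> (nat \<Rightarrow> nat \<Rightarrow> complex) \<Rightarrow> (nat \<Rightarrow> nat \<Rightarrow> complex) \<Rightarrow> nat \<Rightarrow> nat \<Rightarrow> complex" where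
  "mat_mult n A B i j = (\<Sum>l<n. A i l * B l j)"

definition mat_adj :: "(nat \<Rightarrow> nat \<Rightarrow> complex) \<Rightarrow> nat \<Rightarrow> nat \<Rightarrow> complex" where
  "mat_adj A i j = cnj (A j i)"

definition diag_mat :: "(nat \<Rightarrow> complex) \<Rightarrow> nat \<Rightarrow> nat \<Rightarrow> complex" where
  "diag_mat w i j = (if i = j then w i else 0)"

definition vec_mat :: "nat \<Rightarrow> (nat \<Rightarrow> nat \<Rightarrow> 'a) \<Rightarrow> nat \<Rightarrow> 'a" where
  "vec_mat m A l = A (l mod m) (l div m)"

definition Rk :: "nat \<Rightarrow> nat \<Rightarrow> nat \<Rightarrow> real \<Rightarrow> (real \<Rightarrow> real \<Rightarrow> real) \<Rightarrow> nat \<Rightarrow> nat \<Rightarrow> complex" where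
  "Rk M Nc Ng Ts S i j = (\<Sum>q<Ng. integral {-pi/2..pi/2}
      (\<lambda>\<theta>. outer (kron_vec M (fcol Nc q) (arr_resp \<theta>)) i j * complex_of_real (S \<theta> (real q * Ts))))"

definition VM :: "nat \<Rightarrow> nat \<Rightarrow> nat \<Rightarrow> complex" where
  "VM M i j = complex_of_real (1 / sqrt (real M)) *
     exp (- \<i> * complex_of_real (2 * pi * real i * (real j - real M / 2) / real M))"

definition theta_grid :: "nat \<Rightarrow> nat \<Rightarrow> real" where
  "theta_grid M m = arcsin (2 * real m / real M - 1)"

definition Omega :: "nat \<Rightarrow> nat \<Rightarrow> real \<Rightarrow> (real \<Rightarrow> real \<Rightarrow> real) \<Rightarrow> nat \<Rightarrow> nat \<Rightarrow> real" where
  "Omega M Nc Ts S i j = real M * real Nc * (theta_grid M (Suc i) - theta_grid M i)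
      * S (theta_grid M i) (real j * Ts)"

definition Rk_approx :: "nat \<Rightarrow> nat \<Rightarrow> nat \<Rightarrow> real \<Rightarrow> (real \<Rightarrow> real \<Rightarrow> real) \<Rightarrow> nat \<Rightarrow> nat \<Rightarrow> complex" where
  "Rk_approx M Nc Ng Ts S =
     (let K = kron_mat M M (dft Nc) (VM M)
      in mat_mult (Ng * M)
           (mat_mult (Ng * M) K
              (diag_mat (vec_mat M (\<lambda>a b. complex_of_real (Omega M Nc Ts S a b)))))
           (mat_adj K))"

end

theory Submission
  imports Defs
begin

text \<open>For \<open>M > max i j\<close> only the first row block of \<open>F\<^sub>N\<^sub>c\<close> enters entry \<open>(i,j)\<close>,
  and column \<open>m\<close> of \<open>V\<^sub>M\<close> is \<open>v\<^bsub>M,\<theta>\<^sub>m\<^esub>/\<surd>M\<close> because \<open>sin \<theta>\<^sub>m = 2m/M - 1\<close>.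
  So entry \<open>(i,j)\<close> of the approximation is, for each delay, the left Riemann sum of
  \<open>\<integral> g(\<theta>) S(\<theta>,qT\<^sub>s) d\<theta>\<close> with \<open>g(\<theta>) = [v\<^sub>\<theta>]\<^sub>i conj [v\<^sub>\<theta>]\<^sub>j\<close> over the arcsin grid, whose
  mesh tends to zero by uniform continuity of arcsin. Left Riemann sums of a continuous
  function times a bounded Riemann integrable one converge to the integral: on each cell the
  error is controlled by the modulus of continuity of \<open>g\<close> and by the oscillation of \<open>S\<close>,
  and the Darboux oscillation sum of \<open>S\<close> is small for fine partitions.\<close>

definition fine_partition :: "(nat \<Rightarrow> real) \<Rightarrow> nat \<Rightarrow> real \<Rightarrow> real \<Rightarrow> real \<Rightarrow> bool" where
  "fine_partition x n a b d \<longleftrightarrow>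
     x 0 = a \<and> x n = b \<and> (\<forall>i<n. x i < x (Suc i) \<and> x (Suc i) - x i < d)"

definition oscillation_sum :: "(real \<Rightarrow> real) \<Rightarrow> (nat \<Rightarrow> real) \<Rightarrow> nat \<Rightarrow> real" where
  "oscillation_sum f x n =
     (\<Sum>i<n. (Sup (f ` {x i..x (Suc i)}) - Inf (f ` {x i..x (Suc i)})) * (x (Suc i) - x i))"

subsection \<open>Partitions of an interval\<close>

lemma fine_partition_mono:
  assumes "fine_partition x n a b d" "j \<le> k" "k \<le> n"
  shows "x j \<le> x k"
proof -
  have "x i \<le> x (Suc i)" if "i \<in> {..<n}" for i
    using assms(1) that by (auto simp: fine_partition_def less_imp_le)
  moreover have "{j..<k} \<subseteq> {..<n}" using assms(3) by auto
  ultimately show ?thesis using lift_Suc_mono_le_ivl[of "{..<n}" x j k] assms(2) by blast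
qed

lemma fine_partition_cell_subset:
  assumes "fine_partition x n a b d" "i < n"
  shows "{x i..x (Suc i)} \<subseteq> {a..b}"
  using fine_partition_mono[OF assms(1), of 0 i] fine_partition_mono[OF assms(1), of "Suc i" n] assms
  by (auto simp: fine_partition_def)

lemma fine_partition_sum_lengths:
  "fine_partition x n a b d \<Longrightarrow> (\<Sum>i<n. x (Suc i) - x i) = b - a"
  unfolding fine_partition_def by (simp add: sum_lessThan_telescope)

lemma fine_partition_mono_mesh:
  "fine_partition x n a b d \<Longrightarrow> d \<le> d' \<Longrightarrow> fine_partition x n a b d'"
  by (force simp: fine_partition_def)

lemma fine_partition_exists:
  assumes "a < b" "0 < d"
  obtains x n where "fine_partition x n a b d"
proof -
  obtain n :: nat where n: "(b - a) / d < real n" using reals_Archimedean2 by blast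
  then have n0: "real n > 0" using assms by (smt (verit) divide_pos_pos)
  define x where "x i = a + real i * (b - a) / real n" for i
  have step: "x (Suc i) - x i = (b - a) / real n" for i
    using n0 by (simp add: x_def field_simps)
  have lt: "(b - a) / real n < d" using n n0 assms by (simp add: field_simps)
  have pos: "(b - a) / real n > 0" using assms n0 by simp
  have "fine_partition x n a b d"
    unfolding fine_partition_def
  proof (intro conjI allI impI)
    show "x 0 = a" "x n = b" using n0 by (simp_all add: x_def)
    fix i assume "i < n"
    show "x i < x (Suc i)" "x (Suc i) - x i < d" using step[of i] pos lt by linarith+
  qed
  then show ?thesis by (rule that)
qed

subsection \<open>Riemann integrability and oscillation\<close>

lemma bounded_abs_imp_bdd:
  fixes f :: "'a \<Rightarrow> real"
  assumes "\<forall>y\<in>S. \<bar>f y\<bar> \<le> B"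
  shows "bdd_above (f ` S)" "bdd_below (f ` S)"
  using assms by (force simp: abs_le_iff intro: bdd_aboveI[of _ B] bdd_belowI[of _ "-B"])+

lemma Inf_le_le_Sup_cell:
  fixes f :: "real \<Rightarrow> real"
  assumes "\<forall>y\<in>{a..b}. \<bar>f y\<bar> \<le> B" "{c..d} \<subseteq> {a..b}" "y \<in> {c..d}"
  shows "Inf (f ` {c..d}) \<le> f y \<and> f y \<le> Sup (f ` {c..d})"
proof -
  have "\<forall>y\<in>{c..d}. \<bar>f y\<bar> \<le> B" using assms(1,2) by blast
  then have "bdd_above (f ` {c..d})" "bdd_below (f ` {c..d})" by (rule bounded_abs_imp_bdd)+
  then show ?thesis using assms(3) by (simp add: cInf_lower cSup_upper)
qed

lemma oscillation_sum_le_tagged_sums: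
  fixes f :: "real \<Rightarrow> real"
  assumes P: "fine_partition x n a b d" and fb: "\<forall>y\<in>{a..b}. \<bar>f y\<bar> \<le> B" and \<eta>: "\<eta> > 0"
  obtains t s where "\<forall>i<n. x i \<le> t i \<and> t i \<le> x (Suc i) \<and> x i \<le> s i \<and> s i \<le> x (Suc i)"
    "oscillation_sum f x n \<le>
       (\<Sum>i<n. f (t i) * (x (Suc i) - x i)) - (\<Sum>i<n. f (s i) * (x (Suc i) - x i)) + 2 * \<eta> * (b - a)"
proof -
  have "\<exists>t s. t \<in> {x i..x (Suc i)} \<and> s \<in> {x i..x (Suc i)} \<and>
      Sup (f ` {x i..x (Suc i)}) - \<eta> < f t \<and> f s < Inf (f ` {x i..x (Suc i)}) + \<eta>"
    if i: "i < n" for i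
  proof -
    have "\<forall>y\<in>{x i..x (Suc i)}. \<bar>f y\<bar> \<le> B" using fb fine_partition_cell_subset[OF P i] by blast
    then have bdd: "bdd_above (f ` {x i..x (Suc i)})" "bdd_below (f ` {x i..x (Suc i)})"
      by (rule bounded_abs_imp_bdd)+
    have ne: "f ` {x i..x (Suc i)} \<noteq> {}" using P i by (auto simp: fine_partition_def)
    obtain t where "t \<in> {x i..x (Suc i)}" "Sup (f ` {x i..x (Suc i)}) - \<eta> < f t"
      using less_cSup_iff[OF ne bdd(1), of "Sup (f ` {x i..x (Suc i)}) - \<eta>"] \<eta> by auto
    moreover obtain s where "s \<in> {x i..x (Suc i)}" "f s < Inf (f ` {x i..x (Suc i)}) + \<eta>"
      using cInf_less_iff[OF ne bdd(2), of "Inf (f ` {x i..x (Suc i)}) + \<eta>"] \<eta> by auto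
    ultimately show ?thesis by blast
  qed
  then obtain t s where ts: "\<forall>i<n. t i \<in> {x i..x (Suc i)} \<and> s i \<in> {x i..x (Suc i)} \<and>
      Sup (f ` {x i..x (Suc i)}) - \<eta> < f (t i) \<and> f (s i) < Inf (f ` {x i..x (Suc i)}) + \<eta>"
    by metis
  have "oscillation_sum f x n \<le> (\<Sum>i<n. (f (t i) - f (s i) + 2 * \<eta>) * (x (Suc i) - x i))"
    unfolding oscillation_sum_def
  proof (rule sum_mono)
    fix i assume "i \<in> {..<n}"
    then show "(Sup (f ` {x i..x (Suc i)}) - Inf (f ` {x i..x (Suc i)})) * (x (Suc i) - x i)
        \<le> (f (t i) - f (s i) + 2 * \<eta>) * (x (Suc i) - x i)"
      using ts P by (intro mult_right_mono) (auto simp: fine_partition_def less_imp_le)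
  qed
  also have "\<dots> = (\<Sum>i<n. f (t i) * (x (Suc i) - x i)) - (\<Sum>i<n. f (s i) * (x (Suc i) - x i))
      + 2 * \<eta> * (\<Sum>i<n. x (Suc i) - x i)"
    by (simp add: algebra_simps sum.distrib sum_subtractf sum_distrib_left)
  also have "\<dots> = (\<Sum>i<n. f (t i) * (x (Suc i) - x i)) - (\<Sum>i<n. f (s i) * (x (Suc i) - x i))
      + 2 * \<eta> * (b - a)"
    by (simp add: fine_partition_sum_lengths[OF P])
  finally show thesis by (rule that[rotated]) (use ts in auto)
qed

lemma riemann_oscillation_sum_small:
  fixes f :: "real \<Rightarrow> real"
  assumes R: "riemann_has_integral f a b I" and fb: "\<forall>y\<in>{a..b}. \<bar>f y\<bar> \<le> B" and e: "e > 0"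
  obtains d where "d > 0" "\<And>n x. fine_partition x n a b d \<Longrightarrow> oscillation_sum f x n \<le> e"
proof -
  have "e/2 > 0" using e by simp
  then obtain d where d: "d > 0" and D: "\<forall>n x t. x 0 = a \<and> x n = b \<and>
      (\<forall>i<n. x i < x (Suc i) \<and> x (Suc i) - x i < d \<and> x i \<le> t i \<and> t i \<le> x (Suc i)) \<longrightarrow>
      \<bar>(\<Sum>i<n. f (t i) * (x (Suc i) - x i)) - I\<bar> < e/2"
    using R unfolding riemann_has_integral_def by blast
  have "oscillation_sum f x n \<le> e" if P: "fine_partition x n a b d" for n x
  proof (rule field_le_epsilon)
    fix \<epsilon> :: real assume \<epsilon>: "\<epsilon> > 0"
    have ab: "a \<le> b" using fine_partition_mono[OF P, of 0 n] P by (simp add: fine_partition_def)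
    define \<eta> where "\<eta> = \<epsilon> / (2 * (b - a) + 1)"
    have \<eta>: "\<eta> > 0" and \<eta>\<epsilon>: "2 * \<eta> * (b - a) \<le> \<epsilon>"
      using \<epsilon> ab by (simp_all add: \<eta>_def field_simps)
    obtain t s where ts: "\<forall>i<n. x i \<le> t i \<and> t i \<le> x (Suc i) \<and> x i \<le> s i \<and> s i \<le> x (Suc i)"
      and osc: "oscillation_sum f x n \<le>
       (\<Sum>i<n. f (t i) * (x (Suc i) - x i)) - (\<Sum>i<n. f (s i) * (x (Suc i) - x i)) + 2 * \<eta> * (b - a)"
      using oscillation_sum_le_tagged_sums[OF P fb \<eta>] by blast
    have "\<bar>(\<Sum>i<n. f (t i) * (x (Suc i) - x i)) - I\<bar> < e/2"
      using P ts by (intro D[rule_format]) (auto simp: fine_partition_def)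
    moreover have "\<bar>(\<Sum>i<n. f (s i) * (x (Suc i) - x i)) - I\<bar> < e/2"
      using P ts by (intro D[rule_format]) (auto simp: fine_partition_def)
    ultimately show "oscillation_sum f x n \<le> e + \<epsilon>" using osc \<eta>\<epsilon> by linarith
  qed
  then show ?thesis using d that by blast
qed

lemma step_function_below:
  fixes f :: "real \<Rightarrow> real"
  assumes "\<forall>i<n. x i \<le> x (Suc i)" "\<forall>i<n. \<forall>y\<in>{x i..x (Suc i)}. c i \<le> f y"
  shows "\<exists>\<phi>. (\<phi> has_integral (\<Sum>i<n. c i * (x (Suc i) - x i))) {x 0..x n} \<and>
    (\<forall>y\<in>{x 0..x n}. \<phi> y \<le> f y)"
  using assms
proof (induction n)
  case 0
  then show ?case by (intro exI[of _ f]) auto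
next
  case (Suc n)
  then obtain \<phi> where \<phi>: "(\<phi> has_integral (\<Sum>i<n. c i * (x (Suc i) - x i))) {x 0..x n}"
    "\<forall>y\<in>{x 0..x n}. \<phi> y \<le> f y" by auto
  define \<psi> where "\<psi> y = (if y \<le> x n then \<phi> y else c n)" for y
  have le: "x 0 \<le> x n" using lift_Suc_mono_le_ivl[of "{..<Suc n}" x 0 n] Suc.prems by force
  have le2: "x n \<le> x (Suc n)" using Suc.prems by auto
  have left: "(\<psi> has_integral (\<Sum>i<n. c i * (x (Suc i) - x i))) {x 0..x n}"
    by (rule has_integral_spike_finite[OF _ _ \<phi>(1), of "{}"]) (auto simp: \<psi>_def)
  have "((\<lambda>y. c n) has_integral (c n * (x (Suc n) - x n))) {x n..x (Suc n)}"
    using has_integral_const_real[of "c n" "x n" "x (Suc n)"] le2 by (simp add: mult.commute)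
  then have right: "(\<psi> has_integral (c n * (x (Suc n) - x n))) {x n..x (Suc n)}"
    by (rule has_integral_spike_finite[of "{x n}", rotated 2]) (auto simp: \<psi>_def)
  have "(\<psi> has_integral (\<Sum>i<Suc n. c i * (x (Suc i) - x i))) {x 0..x (Suc n)}"
    using has_integral_combine[OF le le2 left right] by simp
  moreover have "\<forall>y\<in>{x 0..x (Suc n)}. \<psi> y \<le> f y"
    using \<phi>(2) Suc.prems by (auto simp: \<psi>_def)
  ultimately show ?case by blast
qed

lemma riemann_has_integral_imp_integrable_on:
  fixes f :: "real \<Rightarrow> real"
  assumes ab: "a < b" and R: "riemann_has_integral f a b I" and fb: "\<forall>y\<in>{a..b}. \<bar>f y\<bar> \<le> B"
  shows "f integrable_on {a..b}"
proof -
  have "f integrable_on cbox a b"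
  proof (rule integrable_straddle_interval)
    fix e :: real assume e: "e > 0"
    obtain d where d: "d > 0" and osc: "\<And>n x. fine_partition x n a b d \<Longrightarrow> oscillation_sum f x n \<le> e/2"
      using riemann_oscillation_sum_small[OF R fb half_gt_zero[OF e]] by blast
    obtain x n where P: "fine_partition x n a b d" using fine_partition_exists[OF ab d] .
    define mx where "mx i = Sup (f ` {x i..x (Suc i)})" for i
    define mn where "mn i = Inf (f ` {x i..x (Suc i)})" for i
    have mono: "\<forall>i<n. x i \<le> x (Suc i)" using P by (auto simp: fine_partition_def less_imp_le)
    have x0: "x 0 = a" and xn: "x n = b" using P by (auto simp: fine_partition_def)
    have bounds: "\<forall>i<n. \<forall>y\<in>{x i..x (Suc i)}. mn i \<le> f y \<and> f y \<le> mx i"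
      using Inf_le_le_Sup_cell[OF fb fine_partition_cell_subset[OF P]] by (auto simp: mn_def mx_def)
    obtain \<phi> where \<phi>: "(\<phi> has_integral (\<Sum>i<n. mn i * (x (Suc i) - x i))) (cbox a b)"
      "\<forall>y\<in>cbox a b. \<phi> y \<le> f y"
      using step_function_below[OF mono, of mn f] bounds x0 xn by auto
    obtain \<psi> where \<psi>: "(\<psi> has_integral (\<Sum>i<n. - mx i * (x (Suc i) - x i))) (cbox a b)"
      "\<forall>y\<in>cbox a b. \<psi> y \<le> - f y"
      using step_function_below[OF mono, of "\<lambda>i. - mx i" "\<lambda>y. - f y"] bounds x0 xn by auto
    have "(\<Sum>i<n. mx i * (x (Suc i) - x i)) - (\<Sum>i<n. mn i * (x (Suc i) - x i)) = oscillation_sum f x n"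
      by (simp add: oscillation_sum_def mx_def mn_def sum_subtractf[symmetric] algebra_simps)
    moreover have "0 \<le> oscillation_sum f x n"
      unfolding oscillation_sum_def mx_def[symmetric] mn_def[symmetric]
    proof (rule sum_nonneg)
      fix i assume "i \<in> {..<n}"
      then show "0 \<le> (mx i - mn i) * (x (Suc i) - x i)"
        using bounds mono by (simp add: order.trans[of "mn i" "f (x i)" "mx i"])
    qed
    ultimately have "\<bar>(\<Sum>i<n. mn i * (x (Suc i) - x i)) - - (\<Sum>i<n. - mx i * (x (Suc i) - x i))\<bar> < e"
      using osc[OF P] e by (simp add: sum_negf)
    moreover have "\<forall>y\<in>cbox a b. \<phi> y \<le> f y \<and> f y \<le> - \<psi> y" using \<phi>(2) \<psi>(2) by force
    ultimately show "\<exists>g h i j. (g has_integral i) (cbox a b) \<and> (h has_integral j) (cbox a b) \<and>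
        \<bar>i - j\<bar> < e \<and> (\<forall>x\<in>cbox a b. g x \<le> f x \<and> f x \<le> h x)"
      using \<phi>(1) has_integral_neg[OF \<psi>(1)] by blast
  qed
  then show ?thesis by simp
qed

subsection \<open>Left Riemann sums of a continuous times a Riemann integrable function\<close>

lemma continuous_times_bounded_integrable:
  fixes f :: "real \<Rightarrow> real" and g :: "real \<Rightarrow> complex"
  assumes f: "f integrable_on {c..d}" and fb: "\<forall>y\<in>{c..d}. \<bar>f y\<bar> \<le> B"
    and g: "continuous_on {c..d} g"
  shows "(\<lambda>y. g y * complex_of_real (f y)) integrable_on {c..d}"
proof -
  obtain G where G: "\<forall>y\<in>{c..d}. norm (g y) \<le> G"
    using compact_imp_bounded[OF compact_continuous_image[OF g compact_Icc]]
    unfolding bounded_iff by blast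
  have f': "(\<lambda>y. complex_of_real (f y)) integrable_on {c..d}"
    using f has_integral_of_real by (metis integrable_on_def)
  have "(\<lambda>y. g y * complex_of_real (f y)) absolutely_integrable_on {c..d}"
  proof (rule measurable_bounded_by_integrable_imp_absolutely_integrable)
    show "(\<lambda>y. g y * complex_of_real (f y)) \<in> borel_measurable (lebesgue_on {c..d})"
      by (intro borel_measurable_times continuous_imp_measurable_on_sets_lebesgue[OF g]
          integrable_imp_measurable[OF f']) auto
    show "(\<lambda>y. G * B) integrable_on {c..d}" by (metis has_integral_const_real integrable_on_def)
    show "norm (g y * complex_of_real (f y)) \<le> G * B" if "y \<in> {c..d}" for y
    proof -
      have "norm (g y) \<le> G" "\<bar>f y\<bar> \<le> B" using G fb that by auto
      then show ?thesis
        unfolding norm_mult norm_of_real by (intro mult_mono) (auto intro: order.trans[OF norm_ge_zero])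
    qed
  qed auto
  then show ?thesis by (simp add: absolutely_integrable_on_def)
qed

lemma integral_cells_error_le:
  fixes h :: "real \<Rightarrow> complex"
  assumes "\<forall>i<n. x i \<le> x (Suc i)" "h integrable_on {x 0..x n}"
    "\<forall>i<n. norm (integral {x i..x (Suc i)} h - c i) \<le> r i"
  shows "norm (integral {x 0..x n} h - (\<Sum>i<n. c i)) \<le> (\<Sum>i<n. r i)"
  using assms
proof (induction n)
  case 0 then show ?case by simp
next
  case (Suc n)
  have le: "x 0 \<le> x n" using lift_Suc_mono_le_ivl[of "{..<Suc n}" x 0 n] Suc.prems by force
  have le2: "x n \<le> x (Suc n)" using Suc.prems by auto
  have "h integrable_on {x 0..x n}"
    using integrable_subinterval_real[OF Suc.prems(2)] le2 by auto
  then have IH: "norm (integral {x 0..x n} h - (\<Sum>i<n. c i)) \<le> (\<Sum>i<n. r i)"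
    using Suc.IH Suc.prems by auto
  have "integral {x 0..x (Suc n)} h - (\<Sum>i<Suc n. c i) =
      (integral {x 0..x n} h - (\<Sum>i<n. c i)) + (integral {x n..x (Suc n)} h - c n)"
    using Henstock_Kurzweil_Integration.integral_combine[OF le le2 Suc.prems(2)] by simp
  then have "norm (integral {x 0..x (Suc n)} h - (\<Sum>i<Suc n. c i)) \<le>
      norm (integral {x 0..x n} h - (\<Sum>i<n. c i)) + norm (integral {x n..x (Suc n)} h - c n)"
    by (metis norm_triangle_ineq)
  moreover have "norm (integral {x n..x (Suc n)} h - c n) \<le> r n" using Suc.prems by simp
  ultimately show ?case using IH by simp
qed

lemma cell_integral_error_le:
  fixes f :: "real \<Rightarrow> real" and g :: "real \<Rightarrow> complex"
  assumes cd: "c < d" and fi: "f integrable_on {c..d}" and fb: "\<forall>y\<in>{c..d}. \<bar>f y\<bar> \<le> B"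
    and g: "continuous_on {c..d} g"
    and w: "\<forall>y\<in>{c..d}. norm (g y - g c) \<le> \<omega>" and G: "norm (g c) \<le> G"
    and mM: "\<forall>y\<in>{c..d}. m \<le> f y \<and> f y \<le> M"
  shows "norm (integral {c..d} (\<lambda>y. g y * of_real (f y)) - g c * of_real (f c) * of_real (d - c))
     \<le> \<omega> * B * (d - c) + G * ((M - m) * (d - c))"
proof -
  define k where "k y = (g y - g c) * complex_of_real (f y)" for y
  have "continuous_on {c..d} (\<lambda>y. g y - g c)" using g by (intro continuous_intros)
  then have k: "(k has_integral integral {c..d} k) {c..d}"
    unfolding k_def using continuous_times_bounded_integrable[OF fi fb] by blast
  have "((\<lambda>y. k y + g c * complex_of_real (f y)) has_integral
        (integral {c..d} k + g c * of_real (integral {c..d} f))) {c..d}"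
    by (intro has_integral_add[OF k] has_integral_mult_right has_integral_of_real
        integrable_integral[OF fi])
  moreover have "(\<lambda>y. k y + g c * complex_of_real (f y)) = (\<lambda>y. g y * of_real (f y))"
    by (auto simp: k_def algebra_simps)
  ultimately have decomp: "integral {c..d} (\<lambda>y. g y * of_real (f y)) - g c * of_real (f c) * of_real (d - c)
      = integral {c..d} k + g c * of_real (integral {c..d} f - f c * (d - c))"
    by (simp add: integral_unique algebra_simps)
  have k_bound: "norm (integral {c..d} k) \<le> \<omega> * B * (d - c)"
  proof -
    have "norm (k y) \<le> \<omega> * B" if "y \<in> cbox c d" for y
    proof -
      have "norm (g y - g c) \<le> \<omega>" "\<bar>f y\<bar> \<le> B" using w fb that by auto
      then show ?thesis
        unfolding k_def norm_mult norm_of_real by (intro mult_mono) (auto intro: order.trans[OF norm_ge_zero])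
    qed
    moreover have "0 \<le> \<omega> * B"
    proof -
      have "c \<in> {c..d}" using cd by simp
      then have "\<bar>f c\<bar> \<le> B" "norm (g c - g c) \<le> \<omega>" using fb w by blast+
      then show ?thesis by (simp add: order.trans[OF abs_ge_zero])
    qed
    ultimately show ?thesis using has_integral_bound[of "\<omega> * B" k _ c d] k cd by simp
  qed
  have f_bound: "\<bar>integral {c..d} f - f c * (d - c)\<bar> \<le> (M - m) * (d - c)"
  proof -
    have "m * (d - c) \<le> integral {c..d} f" "integral {c..d} f \<le> M * (d - c)"
      using integral_le[OF integrable_const_ivl fi, of m] integral_le[OF fi integrable_const_ivl, of M]
        mM cd by (auto simp: mult.commute)
    moreover have "m * (d - c) \<le> f c * (d - c)" "f c * (d - c) \<le> M * (d - c)"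
      using mM cd by (auto intro: mult_right_mono)
    ultimately show ?thesis by (simp add: abs_le_iff algebra_simps)
  qed
  have "norm (integral {c..d} k + g c * of_real (integral {c..d} f - f c * (d - c)))
      \<le> norm (integral {c..d} k) + norm (g c) * \<bar>integral {c..d} f - f c * (d - c)\<bar>"
    by (metis norm_triangle_ineq norm_mult norm_of_real)
  also have "\<dots> \<le> \<omega> * B * (d - c) + G * ((M - m) * (d - c))"
    using k_bound f_bound G order.trans[OF norm_ge_zero G] by (intro add_mono mult_mono) auto
  finally show ?thesis unfolding decomp .
qed

lemma left_riemann_sum_error_le:
  fixes f :: "real \<Rightarrow> real" and g :: "real \<Rightarrow> complex"
  assumes P: "fine_partition x n a b \<delta>" and fi: "f integrable_on {a..b}"
    and fb: "\<forall>y\<in>{a..b}. \<bar>f y\<bar> \<le> B" and g: "continuous_on {a..b} g"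
    and G: "\<forall>y\<in>{a..b}. norm (g y) \<le> G"
    and U: "\<forall>y\<in>{a..b}. \<forall>y'\<in>{a..b}. dist y' y < \<delta> \<longrightarrow> dist (g y') (g y) < \<omega>"
  shows "norm (integral {a..b} (\<lambda>y. g y * of_real (f y)) -
      (\<Sum>i<n. g (x i) * of_real (f (x i)) * of_real (x (Suc i) - x i)))
    \<le> \<omega> * B * (b - a) + G * oscillation_sum f x n"
proof -
  define mx where "mx i = Sup (f ` {x i..x (Suc i)})" for i
  define mn where "mn i = Inf (f ` {x i..x (Suc i)})" for i
  have x0: "x 0 = a" and xn: "x n = b" using P by (auto simp: fine_partition_def)
  have "norm (integral {x i..x (Suc i)} (\<lambda>y. g y * of_real (f y)) -
        g (x i) * of_real (f (x i)) * of_real (x (Suc i) - x i))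
      \<le> \<omega> * B * (x (Suc i) - x i) + G * ((mx i - mn i) * (x (Suc i) - x i))" if i: "i < n" for i
  proof (rule cell_integral_error_le)
    have cell: "{x i..x (Suc i)} \<subseteq> {a..b}" by (rule fine_partition_cell_subset[OF P i])
    have lt: "x i < x (Suc i)" "x (Suc i) - x i < \<delta>" using P i by (auto simp: fine_partition_def)
    show "x i < x (Suc i)" by (rule lt(1))
    show "f integrable_on {x i..x (Suc i)}" by (rule integrable_subinterval_real[OF fi cell])
    show "\<forall>y\<in>{x i..x (Suc i)}. \<bar>f y\<bar> \<le> B" using fb cell by blast
    show "continuous_on {x i..x (Suc i)} g" using g cell by (rule continuous_on_subset)
    show "norm (g (x i)) \<le> G" using G cell lt by auto
    show "\<forall>y\<in>{x i..x (Suc i)}. norm (g y - g (x i)) \<le> \<omega>"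
    proof
      fix y assume y: "y \<in> {x i..x (Suc i)}"
      then have "dist y (x i) < \<delta>" using lt by (auto simp: dist_real_def)
      then have "dist (g y) (g (x i)) < \<omega>" using U y cell lt(1) by auto
      then show "norm (g y - g (x i)) \<le> \<omega>" by (simp add: dist_norm)
    qed
    show "\<forall>y\<in>{x i..x (Suc i)}. mn i \<le> f y \<and> f y \<le> mx i"
      using Inf_le_le_Sup_cell[OF fb cell] by (simp add: mn_def mx_def)
  qed
  then have "norm (integral {x 0..x n} (\<lambda>y. g y * of_real (f y)) -
        (\<Sum>i<n. g (x i) * of_real (f (x i)) * of_real (x (Suc i) - x i)))
      \<le> (\<Sum>i<n. \<omega> * B * (x (Suc i) - x i) + G * ((mx i - mn i) * (x (Suc i) - x i)))"
    using P continuous_times_bounded_integrable[OF fi fb g] x0 xn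
    by (intro integral_cells_error_le) (auto simp: fine_partition_def less_imp_le)
  also have "\<dots> = \<omega> * B * (b - a) + G * oscillation_sum f x n"
    by (simp add: sum.distrib sum_distrib_left[symmetric] fine_partition_sum_lengths[OF P]
        oscillation_sum_def mx_def mn_def)
  finally show ?thesis using x0 xn by simp
qed

lemma left_riemann_sums_tendsto_integral:
  fixes f :: "real \<Rightarrow> real" and g :: "real \<Rightarrow> complex"
    and x :: "'a \<Rightarrow> nat \<Rightarrow> real" and n :: "'a \<Rightarrow> nat"
  assumes ab: "a < b" and R: "riemann_has_integral f a b I" and fb: "\<forall>y\<in>{a..b}. \<bar>f y\<bar> \<le> B"
    and g: "continuous_on {a..b} g"
    and mesh: "\<And>d. d > 0 \<Longrightarrow> eventually (\<lambda>k. fine_partition (x k) (n k) a b d) F"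
  shows "((\<lambda>k. \<Sum>i<n k. g (x k i) * of_real (f (x k i)) * of_real (x k (Suc i) - x k i))
      \<longlongrightarrow> integral {a..b} (\<lambda>y. g y * of_real (f y))) F"
proof (rule tendstoI)
  fix e :: real assume e: "e > 0"
  have fi: "f integrable_on {a..b}" by (rule riemann_has_integral_imp_integrable_on[OF ab R fb])
  have B0: "0 \<le> B" using fb ab by (meson abs_ge_zero atLeastAtMost_iff less_imp_le order.trans order_refl)
  obtain G where G0: "G > 0" and G: "\<forall>y\<in>{a..b}. norm (g y) \<le> G"
    using compact_imp_bounded[OF compact_continuous_image[OF g compact_Icc]]
    unfolding bounded_pos by auto
  define \<omega> where "\<omega> = e / (4 * (B + 1) * (b - a))"
  have "\<omega> > 0" using e B0 ab by (simp add: \<omega>_def)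
  then obtain \<delta> where \<delta>: "\<delta> > 0"
    and U: "\<forall>y\<in>{a..b}. \<forall>y'\<in>{a..b}. dist y' y < \<delta> \<longrightarrow> dist (g y') (g y) < \<omega>"
    using compact_uniformly_continuous[OF g compact_Icc] unfolding uniformly_continuous_on_def by blast
  obtain d where d: "d > 0" and osc: "\<And>n x. fine_partition x n a b d \<Longrightarrow> oscillation_sum f x n \<le> e / (4 * G)"
    using riemann_oscillation_sum_small[OF R fb, of "e / (4 * G)"] e G0 by auto
  have "\<omega> * (b - a) = e / (4 * (B + 1))" using ab by (simp add: \<omega>_def)
  then have "\<omega> * B * (b - a) = B * (e / (4 * (B + 1)))" by (simp add: ac_simps)
  also have "\<dots> \<le> e / 4" using B0 e by (simp add: field_simps)
  finally have "\<omega> * B * (b - a) \<le> e / 4" .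
  moreover have "G * (e / (4 * G)) = e / 4" using G0 by simp
  ultimately have error: "\<omega> * B * (b - a) + G * oscillation_sum f y m < e"
    if "fine_partition y m a b d" for y m
    using mult_left_mono[OF osc[OF that], of G] G0 e by linarith
  have "eventually (\<lambda>k. fine_partition (x k) (n k) a b (min \<delta> d)) F" using mesh \<delta> d by simp
  then show "eventually (\<lambda>k. dist (\<Sum>i<n k. g (x k i) * of_real (f (x k i)) * of_real (x k (Suc i) - x k i))
      (integral {a..b} (\<lambda>y. g y * of_real (f y))) < e) F"
  proof eventually_elim
    case (elim k)
    then have "fine_partition (x k) (n k) a b \<delta>" "fine_partition (x k) (n k) a b d"
      by (auto intro: fine_partition_mono_mesh)
    from left_riemann_sum_error_le[OF this(1) fi fb g G U] error[OF this(2)]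
    show ?case by (simp add: dist_norm norm_minus_commute)
  qed
qed

subsection \<open>The arcsin grid and the entries of the two matrices\<close>

lemma theta_grid_fine_partition:
  assumes d: "d > 0"
  shows "eventually (\<lambda>M. fine_partition (theta_grid M) M (-pi/2) (pi/2) d) sequentially"
proof -
  obtain \<eta> where \<eta>: "\<eta> > 0"
    and U: "\<forall>u\<in>{-1..1}. \<forall>v\<in>{-1..1}. dist v u < \<eta> \<longrightarrow> dist (arcsin v) (arcsin u) < d"
    using compact_uniformly_continuous[OF continuous_on_arcsin' compact_Icc] d
    unfolding uniformly_continuous_on_def by blast
  obtain N :: nat where N: "2 / \<eta> < real N" using reals_Archimedean2 by blast
  have "fine_partition (theta_grid M) M (-pi/2) (pi/2) d" if M: "N < M" for M
    unfolding fine_partition_def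
  proof (intro conjI allI impI)
    have M0: "real M > 0" using M by simp
    show "theta_grid M 0 = -pi/2" "theta_grid M M = pi/2" using M0 by (simp_all add: theta_grid_def)
    fix i assume i: "i < M"
    define u where "u = 2 * real i / real M - 1"
    define v where "v = 2 * real (Suc i) / real M - 1"
    have vu: "v - u = 2 / real M" using M0 by (simp add: u_def v_def field_simps)
    have "2 < \<eta> * real N" using N \<eta> by (simp add: field_simps)
    also have "\<dots> < \<eta> * real M" using M \<eta> by simp
    finally have step: "2 / real M < \<eta>" using M0 by (simp add: field_simps)
    have pos: "2 / real M > 0" using M0 by simp
    have u: "-1 \<le> u" and v: "v \<le> 1" using M0 i by (simp_all add: u_def v_def field_simps)
    have uv: "u < v" using vu pos by linarith
    have vu_close: "dist v u < \<eta>" using vu step pos by (simp add: dist_real_def)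
    have tg: "theta_grid M i = arcsin u" "theta_grid M (Suc i) = arcsin v"
      by (simp_all add: theta_grid_def u_def v_def)
    show "theta_grid M i < theta_grid M (Suc i)"
      unfolding tg by (rule arcsin_less_arcsin[OF u uv v])
    have "dist (arcsin v) (arcsin u) < d" using U u v uv vu_close by auto
    then show "theta_grid M (Suc i) - theta_grid M i < d"
      unfolding tg dist_real_def by linarith
  qed
  then show ?thesis unfolding eventually_sequentially by (metis Suc_le_eq)
qed

lemma VM_eq_arr_resp_theta_grid:
  assumes "m < M"
  shows "VM M k m = complex_of_real (1 / sqrt (real M)) * arr_resp (theta_grid M m) k"
proof -
  have M0: "real M > 0" using assms by simp
  have sin: "sin (theta_grid M m) = 2 * real m / real M - 1"
    unfolding theta_grid_def using assms M0 by (intro sin_arcsin) (auto simp: field_simps)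
  have "2 * pi * real k * (real m - real M / 2) / real M = pi * real k * sin (theta_grid M m)"
    unfolding sin using M0 by (simp add: field_simps)
  then show ?thesis by (simp add: VM_def arr_resp_def)
qed

lemma Rk_approx_summand_eq:
  assumes "m < M" "0 < Nc"
  shows "dft Nc 0 q * VM M i m * complex_of_real (Omega M Nc Ts S m q) * cnj (dft Nc 0 q * VM M j m)
    = arr_resp (theta_grid M m) i * cnj (arr_resp (theta_grid M m) j)
       * complex_of_real (S (theta_grid M m) (real q * Ts))
       * complex_of_real (theta_grid M (Suc m) - theta_grid M m)"
proof -
  define cN where "cN = 1 / sqrt (real Nc)"
  define cM where "cM = 1 / sqrt (real M)"
  define A where "A = arr_resp (theta_grid M m) i"
  define B where "B = arr_resp (theta_grid M m) j"
  define \<Delta> where "\<Delta> = theta_grid M (Suc m) - theta_grid M m"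
  define s where "s = S (theta_grid M m) (real q * Ts)"
  have "cN * cN * real Nc = 1" using assms by (simp add: cN_def)
  moreover have "cM * cM * real M = 1" using assms by (simp add: cM_def)
  ultimately have normalise: "cN * cM * (real M * real Nc * \<Delta> * s) * cN * cM = s * \<Delta>"
    by (metis (no_types, lifting) mult.assoc mult.commute mult.left_commute mult_1)
  have "dft Nc 0 q * VM M i m * complex_of_real (Omega M Nc Ts S m q) * cnj (dft Nc 0 q * VM M j m)
     = (A * cnj B) * complex_of_real (cN * cM * (real M * real Nc * \<Delta> * s) * cN * cM)"
    unfolding VM_eq_arr_resp_theta_grid[OF assms(1)] Omega_def cM_def[symmetric] A_def[symmetric]
      B_def[symmetric] \<Delta>_def[symmetric] s_def[symmetric]
    by (simp add: dft_def cN_def[symmetric] mult_ac)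
  also have "\<dots> = A * cnj B * complex_of_real s * complex_of_real \<Delta>"
    unfolding normalise by (simp add: mult_ac)
  finally show ?thesis by (simp add: A_def B_def s_def \<Delta>_def)
qed

lemma Rk_approx_entry:
  assumes "i < M" "j < M" "0 < Nc"
  shows "Rk_approx M Nc Ng Ts S i j = (\<Sum>q<Ng. \<Sum>m<M.
      arr_resp (theta_grid M m) i * cnj (arr_resp (theta_grid M m) j)
       * complex_of_real (S (theta_grid M m) (real q * Ts))
       * complex_of_real (theta_grid M (Suc m) - theta_grid M m))"
proof -
  define K where "K = kron_mat M M (dft Nc) (VM M)"
  define w where "w = vec_mat M (\<lambda>a b. complex_of_real (Omega M Nc Ts S a b))"
  have diag: "(\<Sum>l'<Ng * M. K i l' * diag_mat w l' l) = K i l * w l" if "l < Ng * M" for l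
    using that by (simp add: diag_mat_def if_distrib cong: if_cong)
  have "Rk_approx M Nc Ng Ts S i j = (\<Sum>l<Ng * M. K i l * w l * cnj (K j l))"
    unfolding Rk_approx_def Let_def K_def[symmetric] w_def[symmetric] mat_mult_def mat_adj_def
    by (rule sum.cong) (auto simp: diag)
  also have "\<dots> = (\<Sum>q<Ng. \<Sum>l\<in>{q * M..<q * M + M}. K i l * w l * cnj (K j l))"
    by (rule sum.nat_group[symmetric])
  also have "\<dots> = (\<Sum>q<Ng. \<Sum>m<M. K i (q * M + m) * w (q * M + m) * cnj (K j (q * M + m)))"
  proof (rule sum.cong[OF refl])
    fix q
    show "(\<Sum>l\<in>{q * M..<q * M + M}. K i l * w l * cnj (K j l)) =
        (\<Sum>m<M. K i (q * M + m) * w (q * M + m) * cnj (K j (q * M + m)))"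
      using sum.shift_bounds_nat_ivl[of "\<lambda>l. K i l * w l * cnj (K j l)" 0 "q * M" M]
      by (simp add: add.commute lessThan_atLeast0)
  qed
  also have "\<dots> = (\<Sum>q<Ng. \<Sum>m<M.
      arr_resp (theta_grid M m) i * cnj (arr_resp (theta_grid M m) j)
       * complex_of_real (S (theta_grid M m) (real q * Ts))
       * complex_of_real (theta_grid M (Suc m) - theta_grid M m))"
  proof (intro sum.cong refl)
    fix q m assume "m \<in> {..<M}"
    then have m: "m < M" and qm: "(q * M + m) div M = q" "(q * M + m) mod M = m" by auto
    have "K i (q * M + m) * w (q * M + m) * cnj (K j (q * M + m)) =
      dft Nc 0 q * VM M i m * complex_of_real (Omega M Nc Ts S m q) * cnj (dft Nc 0 q * VM M j m)"
      using assms unfolding K_def w_def kron_mat_def vec_mat_def qm by simp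
    also have "\<dots> = arr_resp (theta_grid M m) i * cnj (arr_resp (theta_grid M m) j)
       * complex_of_real (S (theta_grid M m) (real q * Ts))
       * complex_of_real (theta_grid M (Suc m) - theta_grid M m)"
      by (rule Rk_approx_summand_eq[OF m assms(3)])
    finally show "K i (q * M + m) * w (q * M + m) * cnj (K j (q * M + m)) = \<dots>" .
  qed
  finally show ?thesis .
qed

lemma Rk_entry:
  assumes "i < M" "j < M"
  shows "Rk M Nc Ng Ts S i j = (\<Sum>q<Ng. integral {-pi/2..pi/2}
      (\<lambda>\<theta>. arr_resp \<theta> i * cnj (arr_resp \<theta> j) * complex_of_real (S \<theta> (real q * Ts))))"
  using assms by (simp add: Rk_def outer_def kron_vec_def fcol_def)

theorem proposition1:
  fixes Nc Ng :: nat and Ts :: real and S :: "real \<Rightarrow> real \<Rightarrow> real" and i j :: nat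
  assumes "0 < Nc" and "0 < Ng" and "Ng \<le> Nc" and "0 < Ts"
    and "\<And>\<theta> q. \<theta> \<in> {-pi/2..pi/2} \<Longrightarrow> q < Ng \<Longrightarrow> 0 \<le> S \<theta> (real q * Ts)"
    and "\<exists>B. \<forall>\<theta>\<in>{-pi/2..pi/2}. \<forall>q<Ng. \<bar>S \<theta> (real q * Ts)\<bar> \<le> B"
    and "\<And>q. q < Ng \<Longrightarrow> riemann_integrable (\<lambda>\<theta>. S \<theta> (real q * Ts)) (-pi/2) (pi/2)"
  shows "(\<lambda>M. Rk M Nc Ng Ts S i j - Rk_approx M Nc Ng Ts S i j) \<longlonglongrightarrow> 0"
proof -
  obtain B where B: "\<forall>\<theta>\<in>{-pi/2..pi/2}. \<forall>q<Ng. \<bar>S \<theta> (real q * Ts)\<bar> \<le> B" using assms(6) by blast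
  define g where "g \<theta> = arr_resp \<theta> i * cnj (arr_resp \<theta> j)" for \<theta>
  define J where "J q = integral {-pi/2..pi/2} (\<lambda>\<theta>. g \<theta> * of_real (S \<theta> (real q * Ts)))" for q
  define T where "T M q = (\<Sum>m<M. g (theta_grid M m) * of_real (S (theta_grid M m) (real q * Ts))
       * of_real (theta_grid M (Suc m) - theta_grid M m))" for M q
  have "(\<lambda>M. T M q) \<longlonglongrightarrow> J q" if q: "q < Ng" for q
  proof -
    obtain I where "riemann_has_integral (\<lambda>\<theta>. S \<theta> (real q * Ts)) (-pi/2) (pi/2) I"
      using assms(7)[OF q] unfolding riemann_integrable_def by blast
    moreover have "continuous_on {-pi/2..pi/2} g" unfolding g_def arr_resp_def by (intro continuous_intros)
    ultimately show ?thesis unfolding T_def J_def using B q theta_grid_fine_partition pi_gt_zero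
      by (intro left_riemann_sums_tendsto_integral) auto
  qed
  then have "(\<lambda>M. (\<Sum>q<Ng. J q) - (\<Sum>q<Ng. T M q)) \<longlonglongrightarrow> (\<Sum>q<Ng. J q) - (\<Sum>q<Ng. J q)"
    by (intro tendsto_diff tendsto_const tendsto_sum) auto
  moreover have "eventually (\<lambda>M. (\<Sum>q<Ng. J q) - (\<Sum>q<Ng. T M q) =
      Rk M Nc Ng Ts S i j - Rk_approx M Nc Ng Ts S i j) sequentially"
    using eventually_gt_at_top[of "max i j"]
    by eventually_elim (simp add: Rk_entry Rk_approx_entry assms(1) J_def T_def g_def)
  ultimately show ?thesis by (simp add: Lim_transform_eventually)
qed

end
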